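(* Let $L_1\geq 1$, $L_2\geq 2$, and let $A\in\mathbb{R}^{J\times N}$ have one-hot columns. Suppose $\sigma$ is Lipschitz continuous with constant $B>0$. Then for all parameters $\{K_l,b_l,c_l\}_{l=1}^{L_1}$ and $\{\hat W_{L_2},\hat W_l,\hat b_l,\hat c_l\}_{l=1}^{L_2-1}$ (of compatible sizes), $$\mathcal{L}(\phi_{\mathrm{CNN}}(\hat X;\theta),A)\leq C_B\cdot\sqrt{L_1+L_2-1}\cdot\mathcal{L}^{\mathrm{CNN}}_{\mathrm S},$$ where $C_B=\max\{\sqrt2,\,2B,\,2B^{L_1+L_2-1}\}$.
   Context: Cross-entropy: for $\boldsymbol z\in\mathbb{R}^J$ and one-hot $\boldsymbol\alpha$ (entries in $\{0,1\}$ summing to 1), $\ell(\boldsymbol z,\boldsymbol\alpha)=-\sum_j\alpha_j\ln\big(e^{z_j}/\sum_ke^{z_k}\big)$; for $Z=[\boldsymbol z_1\cdots\boldsymbol z_N]$, $\mathcal{L}_{\mathrm{vec}}(Z,A)=[\ell(\boldsymbol z_n,\boldsymbol\alpha_n)]_{n=1}^N$ and $\mathcal{L}(Z,A)=\frac1N\sum_n\ell(\boldsymbol z_n,\boldsymbol\alpha_n)$. Input data $\hat X\in\mathbb{R}^{d\times N}$ (columns are vectorized input images). The CNN (single channel) is $\phi_{\mathrm{CNN}}(\boldsymbol x;\theta)=\hat W_{L_2}\sigma(\hat W_{L_2-1}\sigma(\cdots\sigma(\hat W_1P_{L_1}\sigma(K_{L_1}P_{L_1-1}\sigma(\cdots P_1\sigma(K_1\boldsymbol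 x+b_1)\cdots)+b_{L_1})+\hat b_1)\cdots)+\hat b_{L_2-1})$, where $K_l$ are matrices (representing convolutions), $P_l$ are fixed matrices (representing pooling), $b_l,\hat b_l$ are bias vectors, $\hat W_l$ are weight matrices, all of compatible sizes, $\sigma$ acts entrywise, and $\phi_{\mathrm{CNN}}(\hat X;\theta)$ applies it columnwise. With $\mathbf 1\in\mathbb{R}^N$ all-ones, weights: $\omega_{L_1}=\big(\prod_{k=2}^{L_2}\|\hat W_k\|_{\mathrm F}^2\big)\|\hat W_1P_{L_1}\|_{\mathrm F}^2$, $\omega_l=\omega_{L_1}\prod_{j=l+1}^{L_1}\|K_jP_{j-1}\|_{\mathrm F}^2$ for $l=1,\dots,L_1-1$, $\hat\omega_l=\prod_{k=l+1}^{L_2}\|\hat W_k\|_{\mathrm F}^2$ for $l=1,\dots,L_2-1$. Define $T=\|\mathcal{L}_{\mathrm{vec}}(\hat W_{L_2}\sigma(\hat c_{L_2-1}),A)\|_2^2+\sum_{l=2}^{L_1}\omega_l\|K_lP_{l-1}\sigma(c_{l-1})+b_l\mathbf 1^\top-c_l\|_{\mathrm F}^2+\omega_1\|K_1\hat X+b_1\mathbf 1^\top-c_1\|_{\mathrm F}^2+\sum_{l=2}^{L_2-1}\hat\omega_l\|\hat W_l\sigma(\hat c_{l-1})+\hat b_l\mathbf 1^\top-\hat c_l\|_{\mathrm F}^2+\hat\omega_1\|\hat W_1P_{L_1}\sigma(c_{L_1})+\hat b_1\mathbf 1^\top-\hat c_1\|_{\mathrm F}^2$, and $\mathcal{L}^{\mathrm{CNN}}_{\mathrm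 S}=\frac1{\sqrt N}T^{1/2}$. *)

theory Defs
  imports Complex_Main "Jordan_Normal_Form.Matrix"
begin

definition lipschitz_with :: "real \<Rightarrow> (real \<Rightarrow> real) \<Rightarrow> bool" where
  "lipschitz_with B f \<longleftrightarrow> (\<forall>x y. \<bar>f x - f y\<bar> \<le> B * \<bar>x - y\<bar>)"

definition frob_norm :: "real mat \<Rightarrow> real" where
  "frob_norm M = sqrt (\<Sum>i<dim_row M. \<Sum>j<dim_col M. (M $$ (i, j))\<^sup>2)"

definition vnorm2 :: "real vec \<Rightarrow> real" where
  "vnorm2 v = sqrt (\<Sum>i<dim_vec v. (v $ i)\<^sup>2)"

definition bcast :: "real vec \<Rightarrow> nat \<Rightarrow> real mat" where
  "bcast b N = mat (dim_vec b) N (\<lambda>(i, j). b $ i)"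

definition one_hot_cols :: "real mat \<Rightarrow> bool" where
  "one_hot_cols A \<longleftrightarrow> (\<forall>n<dim_col A. (\<forall>j<dim_row A. A $$ (j, n) \<in> {0, 1})
      \<and> (\<Sum>j<dim_row A. A $$ (j, n)) = 1)"

definition ce :: "real vec \<Rightarrow> real vec \<Rightarrow> real" where
  "ce z \<alpha> = - (\<Sum>j<dim_vec z. \<alpha> $ j * ln (exp (z $ j) / (\<Sum>k<dim_vec z. exp (z $ k))))"

definition L_vec :: "real mat \<Rightarrow> real mat \<Rightarrow> real vec" where
  "L_vec Z A = vec (dim_col Z) (\<lambda>n. ce (col Z n) (col A n))"

definition L_loss :: "real mat \<Rightarrow> real mat \<Rightarrow> real" where
  "L_loss Z A = (1 / real (dim_col Z)) * (\<Sum>n<dim_col Z. ce (col Z n) (col A n))"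

fun conv_pre :: "(real \<Rightarrow> real) \<Rightarrow> (nat \<Rightarrow> real mat) \<Rightarrow> (nat \<Rightarrow> real vec) \<Rightarrow> (nat \<Rightarrow> real mat)
    \<Rightarrow> real vec \<Rightarrow> nat \<Rightarrow> real vec" where
  "conv_pre \<sigma> K b P x 0 = x"
| "conv_pre \<sigma> K b P x (Suc 0) = K 1 *\<^sub>v x + b 1"
| "conv_pre \<sigma> K b P x (Suc (Suc l)) =
     (K (Suc (Suc l)) * P (Suc l)) *\<^sub>v map_vec \<sigma> (conv_pre \<sigma> K b P x (Suc l)) + b (Suc (Suc l))"

fun fc_pre :: "(real \<Rightarrow> real) \<Rightarrow> nat \<Rightarrow> (nat \<Rightarrow> real mat) \<Rightarrow> (nat \<Rightarrow> real vec) \<Rightarrow> (nat \<Rightarrow> real mat)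
    \<Rightarrow> (nat \<Rightarrow> real mat) \<Rightarrow> (nat \<Rightarrow> real vec) \<Rightarrow> real vec \<Rightarrow> nat \<Rightarrow> real vec" where
  "fc_pre \<sigma> L1 K b P W bh x 0 = conv_pre \<sigma> K b P x L1"
| "fc_pre \<sigma> L1 K b P W bh x (Suc 0) =
     (W 1 * P L1) *\<^sub>v map_vec \<sigma> (conv_pre \<sigma> K b P x L1) + bh 1"
| "fc_pre \<sigma> L1 K b P W bh x (Suc (Suc l)) =
     W (Suc (Suc l)) *\<^sub>v map_vec \<sigma> (fc_pre \<sigma> L1 K b P W bh x (Suc l)) + bh (Suc (Suc l))"

definition phi_CNN :: "(real \<Rightarrow> real) \<Rightarrow> nat \<Rightarrow> nat \<Rightarrow> (nat \<Rightarrow> real mat) \<Rightarrow> (nat \<Rightarrow> real vec)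
    \<Rightarrow> (nat \<Rightarrow> real mat) \<Rightarrow> (nat \<Rightarrow> real mat) \<Rightarrow> (nat \<Rightarrow> real vec) \<Rightarrow> real vec \<Rightarrow> real vec" where
  "phi_CNN \<sigma> L1 L2 K b P W bh x = W L2 *\<^sub>v map_vec \<sigma> (fc_pre \<sigma> L1 K b P W bh x (L2 - 1))"

definition phi_CNN_mat :: "(real \<Rightarrow> real) \<Rightarrow> nat \<Rightarrow> nat \<Rightarrow> (nat \<Rightarrow> real mat) \<Rightarrow> (nat \<Rightarrow> real vec)
    \<Rightarrow> (nat \<Rightarrow> real mat) \<Rightarrow> (nat \<Rightarrow> real mat) \<Rightarrow> (nat \<Rightarrow> real vec) \<Rightarrow> real mat \<Rightarrow> real mat" where
  "phi_CNN_mat \<sigma> L1 L2 K b P W bh X =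
     mat_of_cols (dim_row (W L2)) (map (\<lambda>n. phi_CNN \<sigma> L1 L2 K b P W bh (col X n)) [0..<dim_col X])"

definition omega :: "nat \<Rightarrow> nat \<Rightarrow> (nat \<Rightarrow> real mat) \<Rightarrow> (nat \<Rightarrow> real mat) \<Rightarrow> (nat \<Rightarrow> real mat) \<Rightarrow> nat \<Rightarrow> real" where
  "omega L1 L2 K P W l =
     (\<Prod>k\<in>{2..L2}. (frob_norm (W k))\<^sup>2) * (frob_norm (W 1 * P L1))\<^sup>2
     * (\<Prod>j\<in>{l+1..L1}. (frob_norm (K j * P (j - 1)))\<^sup>2)"

definition omega_hat :: "nat \<Rightarrow> (nat \<Rightarrow> real mat) \<Rightarrow> nat \<Rightarrow> real" where
  "omega_hat L2 W l = (\<Prod>k\<in>{l+1..L2}. (frob_norm (W k))\<^sup>2)"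

definition T_CNN :: "(real \<Rightarrow> real) \<Rightarrow> nat \<Rightarrow> nat \<Rightarrow> real mat \<Rightarrow> real mat
    \<Rightarrow> (nat \<Rightarrow> real mat) \<Rightarrow> (nat \<Rightarrow> real vec) \<Rightarrow> (nat \<Rightarrow> real mat) \<Rightarrow> (nat \<Rightarrow> real mat)
    \<Rightarrow> (nat \<Rightarrow> real mat) \<Rightarrow> (nat \<Rightarrow> real vec) \<Rightarrow> (nat \<Rightarrow> real mat) \<Rightarrow> real" where
  "T_CNN \<sigma> L1 L2 X A K b c P W bh ch =
     (let N = dim_col X in
       (vnorm2 (L_vec (W L2 * map_mat \<sigma> (ch (L2 - 1))) A))\<^sup>2
     + (\<Sum>l\<in>{2..L1}. omega L1 L2 K P W l *
          (frob_norm (K l * P (l - 1) * map_mat \<sigma> (c (l - 1)) + bcast (b l) N - c l))\<^sup>2)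
     + omega L1 L2 K P W 1 * (frob_norm (K 1 * X + bcast (b 1) N - c 1))\<^sup>2
     + (\<Sum>l\<in>{2..L2-1}. omega_hat L2 W l *
          (frob_norm (W l * map_mat \<sigma> (ch (l - 1)) + bcast (bh l) N - ch l))\<^sup>2)
     + omega_hat L2 W 1 * (frob_norm (W 1 * P L1 * map_mat \<sigma> (c L1) + bcast (bh 1) N - ch 1))\<^sup>2)"

definition L_S_CNN :: "(real \<Rightarrow> real) \<Rightarrow> nat \<Rightarrow> nat \<Rightarrow> real mat \<Rightarrow> real mat
    \<Rightarrow> (nat \<Rightarrow> real mat) \<Rightarrow> (nat \<Rightarrow> real vec) \<Rightarrow> (nat \<Rightarrow> real mat) \<Rightarrow> (nat \<Rightarrow> real mat)
    \<Rightarrow> (nat \<Rightarrow> real mat) \<Rightarrow> (nat \<Rightarrow> real vec) \<Rightarrow> (nat \<Rightarrow> real mat) \<Rightarrow> real" where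
  "L_S_CNN \<sigma> L1 L2 X A K b c P W bh ch =
     1 / sqrt (real (dim_col X)) * sqrt (T_CNN \<sigma> L1 L2 X A K b c P W bh ch)"

end

theory Submission
  imports Defs "HOL-Analysis.L2_Norm"
begin

text \<open>For one sample, let \<open>e\<^sub>k\<close> be the distance between the pre-activation of layer \<open>k\<close> and the
  auxiliary variable \<open>c\<^sub>k\<close>. Since \<open>\<sigma>\<close> is \<open>B\<close>-Lipschitz and the Frobenius norm bounds the operator
  norm, \<open>e\<^sub>k \<le> B \<parallel>M\<^sub>k\<parallel> e\<^sub>k\<^sub>-\<^sub>1 + \<rho>\<^sub>k\<close>, where \<open>\<rho>\<^sub>k\<close> is the norm of the \<open>k\<close>-th residual in \<open>T\<close>;
  unrolling, the output error is at most \<open>\<Sum>\<^sub>i B\<^sup>L\<^sup>+\<^sup>1\<^sup>-\<^sup>i (\<Prod>\<^sub>j\<^sub>>\<^sub>i \<parallel>M\<^sub>j\<parallel>) \<rho>\<^sub>i\<close>.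
  For one-hot labels the cross entropy is \<open>\<surd>2\<close>-Lipschitz in the logits, so the loss of the network
  exceeds the loss of the output computed from the last auxiliary variable by at most \<open>\<surd>2\<close>
  times that error.
  Summing over the samples and applying Cauchy-Schwarz over the samples and over the \<open>L + 1\<close>
  terms of \<open>T\<close> turns the bound into \<open>\<surd>T\<close>. A CNN is such a network with \<open>L1 + L2 - 1\<close> hidden
  layers once the pooling matrices are absorbed into the weights.\<close>

lemma sum_le_sqrt_card_mult_L2_set:
  fixes f :: "'a \<Rightarrow> real"
  shows "(\<Sum>i\<in>I. f i) \<le> sqrt (real (card I)) * L2_set f I"
proof -
  have "(\<Sum>i\<in>I. f i) \<le> (\<Sum>i\<in>I. \<bar>1::real\<bar> * \<bar>f i\<bar>)"
    by (auto intro: sum_mono)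
  also have "\<dots> \<le> L2_set (\<lambda>_. 1) I * L2_set f I"
    by (rule L2_set_mult_ineq)
  finally show ?thesis
    by (simp add: L2_set_constant)
qed

lemma power_le_max_power:
  fixes B :: "'a::linordered_semidom"
  assumes "0 \<le> B" "1 \<le> e" "e \<le> L"
  shows "B ^ e \<le> max B (B ^ L)"
proof (cases "B \<le> 1")
  case True
  then have "B ^ e \<le> B ^ 1"
    using assms by (intro power_decreasing) auto
  then show ?thesis
    by (simp add: le_max_iff_disj)
next
  case False
  then have "B ^ e \<le> B ^ L"
    using assms by (intro power_increasing) auto
  then show ?thesis
    by (simp add: le_max_iff_disj)
qed

lemma add_mult_le_sqrt_mult_sqrt:
  fixes a q y :: real
  shows "a + q * y \<le> sqrt (1 + q\<^sup>2) * sqrt (a\<^sup>2 + y\<^sup>2)"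
proof -
  have "(a + q * y)\<^sup>2 \<le> (1 + q\<^sup>2) * (a\<^sup>2 + y\<^sup>2)"
    using zero_le_power2[of "q * a - y"] by (simp add: power2_eq_square algebra_simps)
  then show ?thesis
    by (simp add: real_le_rsqrt real_sqrt_mult[symmetric])
qed

lemma sqrt_one_add_le_max_mult_sqrt:
  fixes \<mu> L :: real
  assumes "0 \<le> \<mu>" "1 \<le> L"
  shows "sqrt (1 + (sqrt 2 * \<mu> * sqrt L)\<^sup>2) \<le> max (sqrt 2) (2 * \<mu>) * sqrt L"
proof -
  define m where "m = max (sqrt 2) (2 * \<mu>)"
  have "(sqrt 2)\<^sup>2 \<le> m\<^sup>2" "(2 * \<mu>)\<^sup>2 \<le> m\<^sup>2"
    using power_mono[of "sqrt 2" m 2] power_mono[of "2 * \<mu>" m 2] assms(1)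
    unfolding m_def by auto
  then have "(1 + 2 * \<mu>\<^sup>2) * L \<le> m\<^sup>2 * L"
    using assms(2) by (intro mult_right_mono) (auto simp: power_mult_distrib)
  then have "1 + 2 * \<mu>\<^sup>2 * L \<le> m\<^sup>2 * L"
    using assms(2) by (simp add: algebra_simps)
  then have "sqrt (1 + 2 * \<mu>\<^sup>2 * L) \<le> sqrt (m\<^sup>2 * L)"
    by (rule real_sqrt_le_mono)
  also have "\<dots> = m * sqrt L"
    unfolding m_def using assms(1) by (simp add: real_sqrt_mult max_def)
  finally show ?thesis
    unfolding m_def[symmetric] using assms by (simp add: power_mult_distrib)
qed

lemma sum_atLeastAtMost_add_split:
  fixes f :: "nat \<Rightarrow> 'a::comm_monoid_add"
  shows "(\<Sum>k\<in>{1..a+b}. f k) = (\<Sum>k\<in>{1..a}. f k) + (\<Sum>l\<in>{1..b}. f (a + l))"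
proof -
  have "(\<Sum>k\<in>{1..a+b}. f k) = (\<Sum>k\<in>{1..a}. f k) + (\<Sum>k\<in>{a+1..a+b}. f k)"
    by (rule sum.ub_add_nat) simp
  also have "(\<Sum>k\<in>{a+1..a+b}. f k) = (\<Sum>l\<in>{1..b}. f (a + l))"
    using sum.shift_bounds_cl_nat_ivl[of f 1 a b] by (simp add: add.commute)
  finally show ?thesis .
qed

lemma prod_atLeastAtMost_add_split:
  fixes g :: "nat \<Rightarrow> 'a::comm_monoid_mult"
  assumes "i \<le> a"
  shows "(\<Prod>j\<in>{i+1..a+b}. g j) = (\<Prod>j\<in>{i+1..a}. g j) * (\<Prod>l\<in>{1..b}. g (a + l))"
proof -
  have "(\<Prod>j\<in>{i+1..a+b}. g j) = (\<Prod>j\<in>{i+1..a}. g j) * (\<Prod>j\<in>{a+1..a+b}. g j)"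
    using assms by (intro prod.ub_add_nat) simp
  also have "(\<Prod>j\<in>{a+1..a+b}. g j) = (\<Prod>l\<in>{1..b}. g (a + l))"
    using prod.shift_bounds_cl_nat_ivl[of g 1 a b] by (simp add: add.commute)
  finally show ?thesis .
qed

lemma prod_atLeastAtMost_shift:
  fixes g :: "nat \<Rightarrow> 'a::comm_monoid_mult"
  shows "(\<Prod>j\<in>{a+l+1..a+b}. g j) = (\<Prod>i\<in>{l+1..b}. g (a + i))"
  using prod.shift_bounds_cl_nat_ivl[of g "l+1" a b] by (simp add: add.commute add.left_commute)

lemma vnorm2_eq_L2_set: "vnorm2 v = L2_set (\<lambda>i. v $ i) {..<dim_vec v}"
  unfolding vnorm2_def L2_set_def by simp

lemma vnorm2_nonneg: "0 \<le> vnorm2 v"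
  unfolding vnorm2_def by (simp add: sum_nonneg)

lemma frob_norm_nonneg: "0 \<le> frob_norm M"
  unfolding frob_norm_def by (simp add: sum_nonneg)

lemma vnorm2_add_le:
  assumes "dim_vec u = dim_vec v"
  shows "vnorm2 (u + v) \<le> vnorm2 u + vnorm2 v"
proof -
  have "vnorm2 (u + v) = L2_set (\<lambda>i. u $ i + v $ i) {..<dim_vec v}"
    unfolding vnorm2_eq_L2_set by (intro L2_set_cong) (auto simp: assms)
  also have "\<dots> \<le> L2_set (\<lambda>i. u $ i) {..<dim_vec v} + L2_set (\<lambda>i. v $ i) {..<dim_vec v}"
    by (rule L2_set_triangle_ineq)
  finally show ?thesis
    unfolding vnorm2_eq_L2_set using assms by simp
qed

lemma frob_norm_square_eq_sum_cols: "(frob_norm M)\<^sup>2 = (\<Sum>j<dim_col M. (vnorm2 (col M j))\<^sup>2)"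
  unfolding frob_norm_def vnorm2_def by (simp add: sum_nonneg) (rule sum.swap)

lemma vnorm2_mult_mat_vec_le:
  assumes "dim_col M = dim_vec v"
  shows "vnorm2 (M *\<^sub>v v) \<le> frob_norm M * vnorm2 v"
proof -
  have row_le: "\<bar>(M *\<^sub>v v) $ i\<bar> \<le> vnorm2 (row M i) * vnorm2 v" if "i < dim_row M" for i
  proof -
    have "\<bar>(M *\<^sub>v v) $ i\<bar> = \<bar>\<Sum>j<dim_vec v. M $$ (i, j) * v $ j\<bar>"
      using that assms by (simp add: scalar_prod_def lessThan_atLeast0)
    also have "\<dots> \<le> (\<Sum>j<dim_vec v. \<bar>M $$ (i, j)\<bar> * \<bar>v $ j\<bar>)"
      by (rule order_trans[OF sum_abs]) (simp add: abs_mult)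
    also have "\<dots> \<le> L2_set (\<lambda>j. M $$ (i, j)) {..<dim_vec v} * L2_set (\<lambda>j. v $ j) {..<dim_vec v}"
      by (rule L2_set_mult_ineq)
    also have "L2_set (\<lambda>j. M $$ (i, j)) {..<dim_vec v} = vnorm2 (row M i)"
      unfolding vnorm2_eq_L2_set using that assms by (auto intro: L2_set_cong)
    finally show ?thesis
      unfolding vnorm2_eq_L2_set .
  qed
  have "(vnorm2 (M *\<^sub>v v))\<^sup>2 = (\<Sum>i<dim_row M. \<bar>(M *\<^sub>v v) $ i\<bar>\<^sup>2)"
    unfolding vnorm2_def by (simp add: sum_nonneg)
  also have "\<dots> \<le> (\<Sum>i<dim_row M. (vnorm2 (row M i) * vnorm2 v)\<^sup>2)"
    using row_le by (intro sum_mono power_mono) auto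
  also have "\<dots> = (frob_norm M * vnorm2 v)\<^sup>2"
    unfolding frob_norm_def vnorm2_def power_mult_distrib
    by (simp add: sum_nonneg sum_distrib_right)
  finally show ?thesis
    using frob_norm_nonneg vnorm2_nonneg by (metis power2_le_imp_le mult_nonneg_nonneg)
qed

lemma vnorm2_map_vec_diff_le:
  assumes "lipschitz_with B f" "0 \<le> B" "dim_vec u = dim_vec v"
  shows "vnorm2 (map_vec f u - map_vec f v) \<le> B * vnorm2 (u - v)"
proof -
  have "\<bar>f (u $ i) - f (v $ i)\<bar> \<le> B * \<bar>u $ i - v $ i\<bar>" for i
    using assms(1) unfolding lipschitz_with_def by blast
  then have "(f (u $ i) - f (v $ i))\<^sup>2 \<le> (B * (u $ i - v $ i))\<^sup>2" for i
    by (metis abs_ge_zero abs_mult abs_of_nonneg assms(2) power2_abs power_mono)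
  then have "(\<Sum>i<dim_vec v. (f (u $ i) - f (v $ i))\<^sup>2) \<le> B\<^sup>2 * (\<Sum>i<dim_vec v. (u $ i - v $ i)\<^sup>2)"
    by (simp add: sum_distrib_left power_mult_distrib sum_mono)
  then have "vnorm2 (map_vec f u - map_vec f v) \<le> sqrt (B\<^sup>2 * (\<Sum>i<dim_vec v. (u $ i - v $ i)\<^sup>2))"
    unfolding vnorm2_def using assms(3) by (simp add: real_sqrt_le_mono)
  then show ?thesis
    using assms(2,3) unfolding vnorm2_def by (simp add: real_sqrt_mult)
qed

lemma sum_vnorm2_cols_le: "(\<Sum>j<dim_col M. vnorm2 (col M j)) \<le> sqrt (real (dim_col M)) * frob_norm M"
proof -
  have "frob_norm M = L2_set (\<lambda>j. vnorm2 (col M j)) {..<dim_col M}"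
    using frob_norm_square_eq_sum_cols[of M] frob_norm_nonneg[of M]
    unfolding L2_set_def by (metis real_sqrt_unique)
  then show ?thesis
    using sum_le_sqrt_card_mult_L2_set[of "\<lambda>j. vnorm2 (col M j)" "{..<dim_col M}"] by simp
qed

section \<open>Cross entropy\<close>

lemma ce_eq_ln_sum_exp_diff:
  assumes "dim_vec z = J" "(\<Sum>j<J. \<alpha> $ j) = 1"
  shows "ce z \<alpha> = ln (\<Sum>k<J. exp (z $ k)) - (\<Sum>j<J. \<alpha> $ j * z $ j)"
proof -
  have "J > 0"
    using assms(2) by (cases J) auto
  then have S_pos: "(\<Sum>k<J. exp (z $ k)) > 0"
    by (intro sum_pos) auto
  have "ce z \<alpha> = - (\<Sum>j<J. \<alpha> $ j * (z $ j - ln (\<Sum>k<J. exp (z $ k))))"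
    unfolding ce_def assms(1) using S_pos by (simp add: ln_div)
  also have "\<dots> = ln (\<Sum>k<J. exp (z $ k)) * (\<Sum>j<J. \<alpha> $ j) - (\<Sum>j<J. \<alpha> $ j * z $ j)"
    by (simp add: algebra_simps sum_subtractf sum_distrib_right)
  finally show ?thesis
    using assms(2) by simp
qed

text \<open>The gradient inequality for the convex function \<open>z \<mapsto> ln (\<Sum>k. exp (z k))\<close>,
  whose gradient at \<open>z\<close> is the softmax vector.\<close>

lemma ln_sum_exp_diff_le:
  fixes z d :: "'a \<Rightarrow> real"
  assumes "finite I" "I \<noteq> {}"
  defines "S \<equiv> (\<Sum>k\<in>I. exp (z k))"
  shows "ln S - ln (\<Sum>k\<in>I. exp (z k - d k)) \<le> (\<Sum>j\<in>I. exp (z j) / S * d j)"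
proof -
  have S_pos: "S > 0"
    unfolding S_def using assms(1,2) by (intro sum_pos) auto
  define \<mu> where "\<mu> = (\<Sum>j\<in>I. exp (z j) / S * d j)"
  have "exp (z k) * exp (- \<mu>) * (1 + (\<mu> - d k)) \<le> exp (z k - d k)" for k
  proof -
    have "exp (z k - d k) = exp (z k) * exp (- \<mu>) * exp (\<mu> - d k)"
      by (simp add: exp_add[symmetric])
    then show ?thesis
      by (simp add: mult_left_mono exp_ge_add_one_self)
  qed
  then have "(\<Sum>k\<in>I. exp (z k) * exp (- \<mu>) * (1 + (\<mu> - d k))) \<le> (\<Sum>k\<in>I. exp (z k - d k))"
    by (rule sum_mono)
  moreover have "(\<Sum>k\<in>I. exp (z k) * exp (- \<mu>) * (1 + (\<mu> - d k))) = exp (- \<mu>) * S"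
  proof -
    have "(\<Sum>k\<in>I. exp (z k) * exp (- \<mu>) * (1 + (\<mu> - d k)))
        = exp (- \<mu>) * ((1 + \<mu>) * S - (\<Sum>k\<in>I. exp (z k) * d k))"
      unfolding S_def by (simp add: algebra_simps sum_distrib_left sum_subtractf sum.distrib)
    moreover have "(\<Sum>k\<in>I. exp (z k) * d k) = S * \<mu>"
      unfolding \<mu>_def using S_pos by (simp add: sum_distrib_left)
    ultimately show ?thesis
      by (simp add: algebra_simps)
  qed
  ultimately have "ln (exp (- \<mu>) * S) \<le> ln (\<Sum>k\<in>I. exp (z k - d k))"
    using S_pos assms(1,2) by (subst ln_le_cancel_iff) (auto intro!: sum_pos)
  then show ?thesis
    using S_pos unfolding \<mu>_def by (simp add: ln_mult)
qed

lemma ce_le_add_sqrt2_dist: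
  assumes "dim_vec z = J" "dim_vec z' = J"
    and "\<forall>j<J. \<alpha> $ j \<in> {0, 1}" "(\<Sum>j<J. \<alpha> $ j) = 1"
  shows "ce z \<alpha> \<le> ce z' \<alpha> + sqrt 2 * vnorm2 (z - z')"
proof -
  have "J > 0"
    using assms(4) by (cases J) auto
  define S where "S = (\<Sum>k<J. exp (z $ k))"
  have S_pos: "S > 0"
    unfolding S_def using \<open>J > 0\<close> by (intro sum_pos) auto
  define d where "d j = z $ j - z' $ j" for j
  define s where "s j = exp (z $ j) / S" for j
  have s_bounds: "0 \<le> s j \<and> s j \<le> 1" if "j < J" for j
  proof -
    have "exp (z $ j) \<le> S"
      unfolding S_def using that by (intro member_le_sum) auto
    then show ?thesis
      unfolding s_def using S_pos by auto
  qed
  have s_sum: "(\<Sum>j<J. s j) = 1"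
    unfolding s_def S_def using S_pos S_def by (simp add: sum_divide_distrib[symmetric])
  have "ce z \<alpha> - ce z' \<alpha> = ln S - ln (\<Sum>k<J. exp (z $ k - d k)) - (\<Sum>j<J. \<alpha> $ j * d j)"
    unfolding ce_eq_ln_sum_exp_diff[OF assms(1,4)] ce_eq_ln_sum_exp_diff[OF assms(2,4)] S_def d_def
    by (simp add: algebra_simps sum_subtractf)
  also have "\<dots> \<le> (\<Sum>j<J. s j * d j) - (\<Sum>j<J. \<alpha> $ j * d j)"
    using ln_sum_exp_diff_le[of "{..<J}" "\<lambda>k. z $ k" d] \<open>J > 0\<close>
    unfolding S_def s_def by auto
  also have "\<dots> \<le> (\<Sum>j<J. \<bar>s j - \<alpha> $ j\<bar> * \<bar>d j\<bar>)"
    by (simp add: sum_subtractf[symmetric] left_diff_distrib abs_mult[symmetric] sum_mono)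
  also have "\<dots> \<le> L2_set (\<lambda>j. s j - \<alpha> $ j) {..<J} * L2_set d {..<J}"
    by (rule L2_set_mult_ineq)
  also have "\<dots> \<le> sqrt 2 * vnorm2 (z - z')"
  proof (rule mult_mono)
    \<comment> \<open>\<open>s\<close> and the one-hot \<open>\<alpha>\<close> are probability vectors, and \<open>(s - \<alpha>)\<^sup>2 \<le> s + \<alpha>\<close> entrywise.\<close>
    have "(s j - \<alpha> $ j)\<^sup>2 \<le> s j + \<alpha> $ j" if "j < J" for j
    proof -
      have "s j * s j \<le> s j"
        using s_bounds[OF that] by (simp add: mult_left_le)
      then show ?thesis
        using assms(3) that s_bounds[OF that] by (auto simp: power2_eq_square algebra_simps)
    qed
    then have "(\<Sum>j<J. (s j - \<alpha> $ j)\<^sup>2) \<le> 2"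
      using sum_mono[of "{..<J}" "\<lambda>j. (s j - \<alpha> $ j)\<^sup>2" "\<lambda>j. s j + \<alpha> $ j"] s_sum assms(4)
      by (simp add: sum.distrib)
    then show "L2_set (\<lambda>j. s j - \<alpha> $ j) {..<J} \<le> sqrt 2"
      unfolding L2_set_def by simp
    show "L2_set d {..<J} \<le> vnorm2 (z - z')"
      unfolding vnorm2_def L2_set_def d_def using assms(1,2) by simp
  qed auto
  finally show ?thesis
    by simp
qed

section \<open>Error propagation through the layers\<close>

lemma vnorm2_mult_map_vec_diff_le:
  assumes "M \<in> carrier_mat r s" "u \<in> carrier_vec s" "v \<in> carrier_vec s"
    and "lipschitz_with B f" "0 \<le> B"
  shows "vnorm2 (M *\<^sub>v map_vec f u - M *\<^sub>v map_vec f v) \<le> frob_norm M * B * vnorm2 (u - v)"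
proof -
  have "M *\<^sub>v map_vec f u - M *\<^sub>v map_vec f v = M *\<^sub>v (map_vec f u - map_vec f v)"
    using assms(1-3) by (simp add: mult_minus_distrib_mat_vec)
  then have "vnorm2 (M *\<^sub>v map_vec f u - M *\<^sub>v map_vec f v) \<le> frob_norm M * vnorm2 (map_vec f u - map_vec f v)"
    using vnorm2_mult_mat_vec_le[of M "map_vec f u - map_vec f v"] assms(1-3) by simp
  also have "\<dots> \<le> frob_norm M * (B * vnorm2 (u - v))"
    using assms by (intro mult_left_mono vnorm2_map_vec_diff_le frob_norm_nonneg) auto
  finally show ?thesis
    by simp
qed

lemma vnorm2_layer_residual_le:
  assumes "M \<in> carrier_mat r s" "u \<in> carrier_vec s" "v \<in> carrier_vec s"
    and "lipschitz_with B f" "0 \<le> B" "\<beta> \<in> carrier_vec r" "y \<in> carrier_vec r"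
  shows "vnorm2 (M *\<^sub>v map_vec f u + \<beta> - y)
     \<le> frob_norm M * B * vnorm2 (u - v) + vnorm2 (M *\<^sub>v map_vec f v + \<beta> - y)"
proof -
  have "M *\<^sub>v map_vec f u + \<beta> - y = (M *\<^sub>v map_vec f u - M *\<^sub>v map_vec f v) + (M *\<^sub>v map_vec f v + \<beta> - y)"
    using assms by (intro eq_vecI) auto
  then have "vnorm2 (M *\<^sub>v map_vec f u + \<beta> - y)
      \<le> vnorm2 (M *\<^sub>v map_vec f u - M *\<^sub>v map_vec f v) + vnorm2 (M *\<^sub>v map_vec f v + \<beta> - y)"
    using assms vnorm2_add_le[of "M *\<^sub>v map_vec f u - M *\<^sub>v map_vec f v" "M *\<^sub>v map_vec f v + \<beta> - y"]
    by simp
  then show ?thesis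
    using vnorm2_mult_map_vec_diff_le[OF assms(1-5)] by simp
qed

lemma linear_recurrence_le_sum:
  fixes e a \<rho> :: "nat \<Rightarrow> real"
  assumes "e 0 = 0"
    and "\<And>k. 1 \<le> k \<Longrightarrow> k \<le> n \<Longrightarrow> e k \<le> a k * B * e (k - 1) + \<rho> k"
    and "\<And>k. 0 \<le> a k" "0 \<le> B"
  shows "k \<le> n \<Longrightarrow> e k \<le> (\<Sum>i\<in>{1..k}. B ^ (k - i) * (\<Prod>j\<in>{i+1..k}. a j) * \<rho> i)"
proof (induction k)
  case 0
  then show ?case
    using assms(1) by simp
next
  case (Suc k)
  have "e (Suc k) \<le> a (Suc k) * B * e k + \<rho> (Suc k)"
    using assms(2)[of "Suc k"] Suc.prems by simp
  also have "\<dots> \<le> a (Suc k) * B * (\<Sum>i\<in>{1..k}. B ^ (k - i) * (\<Prod>j\<in>{i+1..k}. a j) * \<rho> i) + \<rho> (Suc k)"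
    using Suc assms(3,4) by (intro add_right_mono mult_left_mono) auto
  also have "\<dots> = (\<Sum>i\<in>{1..Suc k}. B ^ (Suc k - i) * (\<Prod>j\<in>{i+1..Suc k}. a j) * \<rho> i)"
  proof -
    have "(\<Sum>i\<in>{1..k}. B ^ (Suc k - i) * (\<Prod>j\<in>{i+1..Suc k}. a j) * \<rho> i)
        = (\<Sum>i\<in>{1..k}. a (Suc k) * B * (B ^ (k - i) * (\<Prod>j\<in>{i+1..k}. a j) * \<rho> i))"
      by (intro sum.cong) (auto simp: prod.cl_ivl_Suc Suc_diff_le)
    then show ?thesis
      by (simp add: sum.cl_ivl_Suc sum_distrib_left)
  qed
  finally show ?case .
qed

section \<open>Feed-forward networks with auxiliary variables\<close>

text \<open>\<open>z q k\<close> is the pre-activation of hidden layer \<open>k\<close> at the \<open>q\<close>-th sample and \<open>C k\<close> the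
  auxiliary variable for it; the first layer \<open>Z1\<close> is arbitrary and the output layer
  \<open>M (Suc L)\<close> has no bias.\<close>

locale lifted_network =
  fixes \<sigma> :: "real \<Rightarrow> real" and B :: real
    and L N J :: nat and w :: "nat \<Rightarrow> nat"
    and M :: "nat \<Rightarrow> real mat" and \<beta> :: "nat \<Rightarrow> real vec" and C :: "nat \<Rightarrow> real mat"
    and Z1 \<Phi> A :: "real mat" and z :: "nat \<Rightarrow> nat \<Rightarrow> real vec"
  assumes L_pos: "1 \<le> L"
    and B_nonneg: "0 \<le> B" and lipschitz: "lipschitz_with B \<sigma>"
    and A_carrier: "A \<in> carrier_mat J N" and A_one_hot: "one_hot_cols A"
    and M_carrier: "\<And>k. 2 \<le> k \<Longrightarrow> k \<le> L \<Longrightarrow> M k \<in> carrier_mat (w k) (w (k - 1))"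
    and M_out_carrier: "M (Suc L) \<in> carrier_mat J (w L)"
    and \<beta>_carrier: "\<And>k. 2 \<le> k \<Longrightarrow> k \<le> L \<Longrightarrow> \<beta> k \<in> carrier_vec (w k)"
    and C_carrier: "\<And>k. 1 \<le> k \<Longrightarrow> k \<le> L \<Longrightarrow> C k \<in> carrier_mat (w k) N"
    and Z1_carrier: "Z1 \<in> carrier_mat (w 1) N"
    and \<Phi>_carrier: "\<Phi> \<in> carrier_mat J N"
    and z_first: "\<And>q. q < N \<Longrightarrow> z q 1 = col Z1 q"
    and z_step: "\<And>q k. q < N \<Longrightarrow> 2 \<le> k \<Longrightarrow> k \<le> L \<Longrightarrow>
                   z q k = M k *\<^sub>v map_vec \<sigma> (z q (k - 1)) + \<beta> k"
    and \<Phi>_col: "\<And>q. q < N \<Longrightarrow> col \<Phi> q = M (Suc L) *\<^sub>v map_vec \<sigma> (z q L)"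
begin

definition lifted_output :: "real mat" where
  "lifted_output = M (Suc L) * map_mat \<sigma> (C L)"

definition residual :: "nat \<Rightarrow> real mat" where
  "residual k = (if k = 1 then Z1 - C 1 else M k * map_mat \<sigma> (C (k - 1)) + bcast (\<beta> k) N - C k)"

definition gain :: "nat \<Rightarrow> real" where
  "gain k = (\<Prod>j\<in>{k+1..Suc L}. frob_norm (M j))"

definition layer_weight :: "nat \<Rightarrow> real" where
  "layer_weight k = (\<Prod>j\<in>{k+1..Suc L}. (frob_norm (M j))\<^sup>2)"

definition lifted_objective :: real where
  "lifted_objective = (vnorm2 (L_vec lifted_output A))\<^sup>2
     + (\<Sum>k\<in>{1..L}. layer_weight k * (frob_norm (residual k))\<^sup>2)"

lemma layer_weight_eq_gain_square: "layer_weight k = (gain k)\<^sup>2"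
  unfolding layer_weight_def gain_def by (simp only: prod_power_distrib)

lemma gain_nonneg: "0 \<le> gain k"
  unfolding gain_def by (simp add: prod_nonneg frob_norm_nonneg)

lemma col_C_carrier: "1 \<le> k \<Longrightarrow> k \<le> L \<Longrightarrow> col (C k) q \<in> carrier_vec (w k)"
  using C_carrier[of k] by (intro carrier_vecI) auto

lemma z_carrier:
  assumes "q < N" "1 \<le> k" "k \<le> L"
  shows "z q k \<in> carrier_vec (w k)"
proof (cases "k = 1")
  case True
  then show ?thesis
    using assms(1) z_first Z1_carrier by (simp add: carrier_vecI)
next
  case False
  then have "dim_vec (z q k) = dim_vec (\<beta> k)"
    using assms z_step[of q k] by simp
  then show ?thesis
    using False assms \<beta>_carrier[of k] by (intro carrier_vecI) auto
qed

lemma lifted_output_carrier: "lifted_output \<in> carrier_mat J N"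
  unfolding lifted_output_def using M_out_carrier C_carrier[of L] L_pos by auto

lemma col_lifted_output: "q < N \<Longrightarrow> col lifted_output q = M (Suc L) *\<^sub>v map_vec \<sigma> (col (C L) q)"
  unfolding lifted_output_def using M_out_carrier C_carrier[of L] L_pos by auto

lemma dim_col_residual: "1 \<le> k \<Longrightarrow> k \<le> L \<Longrightarrow> dim_col (residual k) = N"
  unfolding residual_def using C_carrier Z1_carrier by auto

lemma col_residual_first: "q < N \<Longrightarrow> col (residual 1) q = z q 1 - col (C 1) q"
  unfolding residual_def using z_first Z1_carrier C_carrier[of 1] L_pos by auto

lemma col_residual:
  assumes "q < N" "2 \<le> k" "k \<le> L"
  shows "col (residual k) q = M k *\<^sub>v map_vec \<sigma> (col (C (k - 1)) q) + \<beta> k - col (C k) q"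
proof -
  have "C (k - 1) \<in> carrier_mat (w (k - 1)) N" "C k \<in> carrier_mat (w k) N"
    using assms C_carrier by auto
  then show ?thesis
    unfolding residual_def using assms M_carrier[of k] \<beta>_carrier[of k]
    by (intro eq_vecI) (auto simp: bcast_def)
qed

lemma layer_error_le:
  assumes "q < N" "2 \<le> k" "k \<le> L"
  shows "vnorm2 (z q k - col (C k) q)
    \<le> frob_norm (M k) * B * vnorm2 (z q (k - 1) - col (C (k - 1)) q) + vnorm2 (col (residual k) q)"
  unfolding z_step[OF assms] col_residual[OF assms] using assms
  by (intro vnorm2_layer_residual_le[OF M_carrier] z_carrier col_C_carrier \<beta>_carrier lipschitz B_nonneg)
    auto

lemma output_error_le:
  "q < N \<Longrightarrow> vnorm2 (col \<Phi> q - col lifted_output q)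
    \<le> frob_norm (M (Suc L)) * B * vnorm2 (z q L - col (C L) q)"
  unfolding \<Phi>_col col_lifted_output using L_pos
  by (intro vnorm2_mult_map_vec_diff_le[OF M_out_carrier] z_carrier col_C_carrier lipschitz B_nonneg)
    auto

lemma output_error_le_sum_residuals:
  assumes "q < N"
  shows "vnorm2 (col \<Phi> q - col lifted_output q)
    \<le> (\<Sum>i\<in>{1..L}. B ^ (Suc L - i) * gain i * vnorm2 (col (residual i) q))"
proof -
  define e where "e k = (if k = 0 then 0 else if k \<le> L then vnorm2 (z q k - col (C k) q)
    else vnorm2 (col \<Phi> q - col lifted_output q))" for k
  define \<rho> where "\<rho> k = (if k \<le> L then vnorm2 (col (residual k) q) else 0)" for k
  have "e (Suc L) \<le> (\<Sum>i\<in>{1..Suc L}. B ^ (Suc L - i) * (\<Prod>j\<in>{i+1..Suc L}. frob_norm (M j)) * \<rho> i)"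
  proof (rule linear_recurrence_le_sum[where a = "\<lambda>k. frob_norm (M k)"])
    fix k
    assume k: "1 \<le> k" "k \<le> Suc L"
    consider "k = 1" | "2 \<le> k" "k \<le> L" | "k = Suc L"
      using k L_pos by linarith
    then show "e k \<le> frob_norm (M k) * B * e (k - 1) + \<rho> k"
    proof cases
      case 1
      then show ?thesis
        using L_pos col_residual_first[OF assms] by (simp add: e_def \<rho>_def)
    next
      case 2
      then have "e (k - 1) = vnorm2 (z q (k - 1) - col (C (k - 1)) q)"
        unfolding e_def by auto
      then show ?thesis
        using layer_error_le[OF assms 2] 2 by (simp add: e_def \<rho>_def)
    next
      case 3
      then show ?thesis
        using output_error_le[OF assms] L_pos by (simp add: e_def \<rho>_def)
    qed
  qed (simp_all add: e_def frob_norm_nonneg B_nonneg)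
  also have "\<dots> = (\<Sum>i\<in>{1..L}. B ^ (Suc L - i) * gain i * vnorm2 (col (residual i) q))"
    by (simp add: sum.cl_ivl_Suc \<rho>_def gain_def)
  finally show ?thesis
    by (simp add: e_def)
qed

lemma sum_output_error_le:
  "(\<Sum>q<N. vnorm2 (col \<Phi> q - col lifted_output q))
    \<le> sqrt (real N) * (max B (B ^ L) * (\<Sum>i\<in>{1..L}. gain i * frob_norm (residual i)))"
proof -
  have "(\<Sum>q<N. vnorm2 (col \<Phi> q - col lifted_output q))
      \<le> (\<Sum>q<N. \<Sum>i\<in>{1..L}. B ^ (Suc L - i) * gain i * vnorm2 (col (residual i) q))"
    by (intro sum_mono output_error_le_sum_residuals) simp
  also have "\<dots> = (\<Sum>i\<in>{1..L}. B ^ (Suc L - i) * gain i * (\<Sum>q<N. vnorm2 (col (residual i) q)))"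
    by (subst sum.swap) (simp add: sum_distrib_left)
  also have "\<dots> \<le> (\<Sum>i\<in>{1..L}. max B (B ^ L) * gain i * (sqrt (real N) * frob_norm (residual i)))"
  proof (rule sum_mono)
    fix i
    assume i: "i \<in> {1..L}"
    have "B ^ (Suc L - i) \<le> max B (B ^ L)"
      using i B_nonneg by (intro power_le_max_power) auto
    moreover have "(\<Sum>q<N. vnorm2 (col (residual i) q)) \<le> sqrt (real N) * frob_norm (residual i)"
      using sum_vnorm2_cols_le[of "residual i"] dim_col_residual i by simp
    ultimately show "B ^ (Suc L - i) * gain i * (\<Sum>q<N. vnorm2 (col (residual i) q))
        \<le> max B (B ^ L) * gain i * (sqrt (real N) * frob_norm (residual i))"
      using B_nonneg gain_nonneg by (intro mult_mono) (auto simp: sum_nonneg vnorm2_nonneg)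
  qed
  also have "\<dots> = sqrt (real N) * (max B (B ^ L) * (\<Sum>i\<in>{1..L}. gain i * frob_norm (residual i)))"
    by (simp add: sum_distrib_left algebra_simps)
  finally show ?thesis .
qed

lemma sum_ce_lifted_output_le:
  "(\<Sum>q<N. ce (col lifted_output q) (col A q)) \<le> sqrt (real N) * vnorm2 (L_vec lifted_output A)"
proof -
  have "vnorm2 (L_vec lifted_output A) = L2_set (\<lambda>q. ce (col lifted_output q) (col A q)) {..<N}"
    using lifted_output_carrier unfolding vnorm2_def L_vec_def L2_set_def by simp
  then show ?thesis
    using sum_le_sqrt_card_mult_L2_set[of "\<lambda>q. ce (col lifted_output q) (col A q)" "{..<N}"] by simp
qed

lemma loss_le_output_and_residuals:
  assumes "0 < N"
  shows "L_loss \<Phi> A \<le> 1 / sqrt (real N) * (vnorm2 (L_vec lifted_output A)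
    + sqrt 2 * (max B (B ^ L) * (\<Sum>i\<in>{1..L}. gain i * frob_norm (residual i))))"
proof -
  have rescale: "1 / real N * (sqrt (real N) * x + c * (sqrt (real N) * y)) = 1 / sqrt (real N) * (x + c * y)"
    for x y c
    using assms by (simp add: field_simps flip: real_sqrt_mult)
  have "ce (col \<Phi> q) (col A q)
      \<le> ce (col lifted_output q) (col A q) + sqrt 2 * vnorm2 (col \<Phi> q - col lifted_output q)"
    if "q < N" for q
    using that A_carrier A_one_hot \<Phi>_carrier lifted_output_carrier
    by (intro ce_le_add_sqrt2_dist[of _ J]) (auto simp: one_hot_cols_def)
  then have "(\<Sum>q<N. ce (col \<Phi> q) (col A q))
      \<le> (\<Sum>q<N. ce (col lifted_output q) (col A q) + sqrt 2 * vnorm2 (col \<Phi> q - col lifted_output q))"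
    by (intro sum_mono) simp
  also have "\<dots> = (\<Sum>q<N. ce (col lifted_output q) (col A q))
      + sqrt 2 * (\<Sum>q<N. vnorm2 (col \<Phi> q - col lifted_output q))"
    by (simp add: sum.distrib sum_distrib_left)
  finally have sum_ce_le: "(\<Sum>q<N. ce (col \<Phi> q) (col A q)) \<le> (\<Sum>q<N. ce (col lifted_output q) (col A q))
      + sqrt 2 * (\<Sum>q<N. vnorm2 (col \<Phi> q - col lifted_output q))" .
  have "dim_col \<Phi> = N"
    using \<Phi>_carrier by simp
  then have "L_loss \<Phi> A \<le> 1 / real N * ((\<Sum>q<N. ce (col lifted_output q) (col A q))
      + sqrt 2 * (\<Sum>q<N. vnorm2 (col \<Phi> q - col lifted_output q)))"
    unfolding L_loss_def using sum_ce_le by (simp add: divide_right_mono)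
  also have "\<dots> \<le> 1 / real N * (sqrt (real N) * vnorm2 (L_vec lifted_output A)
      + sqrt 2 * (sqrt (real N) * (max B (B ^ L) * (\<Sum>i\<in>{1..L}. gain i * frob_norm (residual i)))))"
    by (intro mult_left_mono add_mono sum_ce_lifted_output_le sum_output_error_le) auto
  also have "\<dots> = 1 / sqrt (real N) * (vnorm2 (L_vec lifted_output A)
      + sqrt 2 * (max B (B ^ L) * (\<Sum>i\<in>{1..L}. gain i * frob_norm (residual i))))"
    by (rule rescale)
  finally show ?thesis .
qed

theorem loss_le_lifted_objective:
  "L_loss \<Phi> A \<le> max (sqrt 2) (2 * max B (B ^ L)) * sqrt (real L) * (1 / sqrt (real N) * sqrt lifted_objective)"
proof (cases "N = 0")
  case True
  then show ?thesis
    using \<Phi>_carrier by (simp add: L_loss_def)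
next
  case False
  define a where "a = vnorm2 (L_vec lifted_output A)"
  define y where "y = L2_set (\<lambda>i. gain i * frob_norm (residual i)) {1..L}"
  define \<mu> where "\<mu> = max B (B ^ L)"
  have "\<mu> \<ge> 0"
    unfolding \<mu>_def using B_nonneg by simp
  have objective: "lifted_objective = a\<^sup>2 + y\<^sup>2"
    unfolding lifted_objective_def a_def y_def L2_set_def layer_weight_eq_gain_square
    by (simp add: sum_nonneg power_mult_distrib)
  have "(\<Sum>i\<in>{1..L}. gain i * frob_norm (residual i)) \<le> sqrt (real L) * y"
    unfolding y_def using sum_le_sqrt_card_mult_L2_set[of _ "{1..L}"] by simp
  then have "a + sqrt 2 * \<mu> * (\<Sum>i\<in>{1..L}. gain i * frob_norm (residual i)) \<le> a + sqrt 2 * \<mu> * sqrt (real L) * y"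
    using \<open>\<mu> \<ge> 0\<close> by (simp add: mult_left_mono mult.assoc)
  also have "\<dots> \<le> sqrt (1 + (sqrt 2 * \<mu> * sqrt (real L))\<^sup>2) * sqrt (a\<^sup>2 + y\<^sup>2)"
    by (rule add_mult_le_sqrt_mult_sqrt)
  also have "\<dots> \<le> max (sqrt 2) (2 * \<mu>) * sqrt (real L) * sqrt lifted_objective"
    unfolding objective using \<open>\<mu> \<ge> 0\<close> L_pos
    by (intro mult_right_mono sqrt_one_add_le_max_mult_sqrt) auto
  finally have "1 / sqrt (real N) * (a + sqrt 2 * \<mu> * (\<Sum>i\<in>{1..L}. gain i * frob_norm (residual i)))
      \<le> 1 / sqrt (real N) * (max (sqrt 2) (2 * \<mu>) * sqrt (real L) * sqrt lifted_objective)"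
    by (rule mult_left_mono) simp
  then show ?thesis
    using loss_le_output_and_residuals False unfolding a_def[symmetric] \<mu>_def[symmetric]
    by (simp add: mult_ac)
qed

end

section \<open>The CNN\<close>

definition join_layers :: "nat \<Rightarrow> (nat \<Rightarrow> 'a) \<Rightarrow> (nat \<Rightarrow> 'a) \<Rightarrow> nat \<Rightarrow> 'a" where
  "join_layers L1 f g k = (if k \<le> L1 then f k else g (k - L1))"

lemma join_layers_low [simp]: "k \<le> L1 \<Longrightarrow> join_layers L1 f g k = f k"
  by (simp add: join_layers_def)

lemma join_layers_high [simp]: "L1 < k \<Longrightarrow> join_layers L1 f g k = g (k - L1)"
  by (simp add: join_layers_def)

lemma conv_pre_step:
  "2 \<le> l \<Longrightarrow> conv_pre \<sigma> K b P x l = (K l * P (l - 1)) *\<^sub>v map_vec \<sigma> (conv_pre \<sigma> K b P x (l - 1)) + b l"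
  by (cases l; cases "l - 1") auto

lemma fc_pre_step:
  "2 \<le> l \<Longrightarrow> fc_pre \<sigma> L1 K b P W bh x l = W l *\<^sub>v map_vec \<sigma> (fc_pre \<sigma> L1 K b P W bh x (l - 1)) + bh l"
  by (cases l; cases "l - 1") auto

locale cnn_setting =
  fixes \<sigma> :: "real \<Rightarrow> real" and B :: real
    and L1 L2 d N J :: nat
    and m p n :: "nat \<Rightarrow> nat"
    and X A :: "real mat"
    and K P W c ch :: "nat \<Rightarrow> real mat"
    and b bh :: "nat \<Rightarrow> real vec"
  assumes L1_pos: "L1 \<ge> 1" and L2_ge_2: "L2 \<ge> 2"
    and X_carrier: "X \<in> carrier_mat d N"
    and A_carrier: "A \<in> carrier_mat J N" and A_one_hot: "one_hot_cols A"
    and B_pos: "B > 0" and lipschitz: "lipschitz_with B \<sigma>"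
    and conv_carrier: "\<forall>l\<in>{1..L1}. K l \<in> carrier_mat (m l) (if l = 1 then d else p (l - 1))
                  \<and> P l \<in> carrier_mat (p l) (m l)
                  \<and> b l \<in> carrier_vec (m l)
                  \<and> c l \<in> carrier_mat (m l) N"
    and fc_carrier: "\<forall>l\<in>{1..<L2}. W l \<in> carrier_mat (n l) (if l = 1 then p L1 else n (l - 1))
                  \<and> bh l \<in> carrier_vec (n l)
                  \<and> ch l \<in> carrier_mat (n l) N"
    and W_out_carrier: "W L2 \<in> carrier_mat J (n (L2 - 1))"
begin

text \<open>Hidden layer \<open>k \<le> L1\<close> of the network is convolutional layer \<open>k\<close>, hidden layer \<open>L1 + l\<close> is
  fully connected layer \<open>l\<close>, and each pooling matrix is absorbed into the weight matrix after it.\<close>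

definition layer_mat :: "nat \<Rightarrow> real mat" where
  "layer_mat = join_layers L1 (\<lambda>k. K k * P (k - 1)) (\<lambda>l. if l = 1 then W 1 * P L1 else W l)"

definition pre_activation :: "nat \<Rightarrow> nat \<Rightarrow> real vec" where
  "pre_activation q = join_layers L1 (conv_pre \<sigma> K b P (col X q)) (fc_pre \<sigma> L1 K b P W bh (col X q))"

lemma layer_mat_conv [simp]: "k \<le> L1 \<Longrightarrow> layer_mat k = K k * P (k - 1)"
  by (simp add: layer_mat_def)

lemma layer_mat_fc_first [simp]: "layer_mat (Suc L1) = W 1 * P L1"
  by (simp add: layer_mat_def)

lemma layer_mat_fc [simp]: "2 \<le> l \<Longrightarrow> layer_mat (L1 + l) = W l"
  by (simp add: layer_mat_def)

lemma conv_layer_carrier: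
  assumes "1 \<le> l" "l \<le> L1"
  shows "K l \<in> carrier_mat (m l) (if l = 1 then d else p (l - 1))" "P l \<in> carrier_mat (p l) (m l)"
    "b l \<in> carrier_vec (m l)" "c l \<in> carrier_mat (m l) N"
  using conv_carrier assms by auto

lemma fc_layer_carrier:
  assumes "1 \<le> l" "l < L2"
  shows "W l \<in> carrier_mat (n l) (if l = 1 then p L1 else n (l - 1))"
    "bh l \<in> carrier_vec (n l)" "ch l \<in> carrier_mat (n l) N"
  using fc_carrier assms by auto

lemma layer_mat_carrier:
  assumes "2 \<le> k" "k \<le> L1 + L2 - 1"
  shows "layer_mat k \<in> carrier_mat (join_layers L1 m n k) (join_layers L1 m n (k - 1))"
proof -
  consider "k \<le> L1" | "k = L1 + 1" | "L1 + 2 \<le> k"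
    by linarith
  then show ?thesis
  proof cases
    case 1
    then show ?thesis
      using assms conv_layer_carrier(1)[of k] conv_layer_carrier(2)[of "k - 1"]
      by (auto simp: layer_mat_def)
  next
    case 2
    then show ?thesis
      using L1_pos L2_ge_2 fc_layer_carrier(1)[of 1] conv_layer_carrier(2)[of L1]
      by (auto simp: layer_mat_def)
  next
    case 3
    then show ?thesis
      using assms fc_layer_carrier(1)[of "k - L1"]
      by (auto simp: layer_mat_def)
  qed
qed

lemma pre_activation_step:
  assumes "2 \<le> k" "k \<le> L1 + L2 - 1"
  shows "pre_activation q k = layer_mat k *\<^sub>v map_vec \<sigma> (pre_activation q (k - 1)) + join_layers L1 b bh k"
proof -
  consider "k \<le> L1" | "k = L1 + 1" | "L1 + 2 \<le> k"
    by linarith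
  then show ?thesis
  proof cases
    case 1
    then show ?thesis
      using assms by (simp add: pre_activation_def layer_mat_def conv_pre_step)
  next
    case 2
    then show ?thesis
      by (simp add: pre_activation_def layer_mat_def)
  next
    case 3
    then have "fc_pre \<sigma> L1 K b P W bh x (k - L1)
        = W (k - L1) *\<^sub>v map_vec \<sigma> (fc_pre \<sigma> L1 K b P W bh x (k - 1 - L1)) + bh (k - L1)" for x
      using fc_pre_step[of "k - L1"] by (simp add: diff_right_commute)
    moreover have "k - L1 \<noteq> 1" "L1 < k - 1"
      using 3 by auto
    ultimately show ?thesis
      using 3 by (simp add: pre_activation_def layer_mat_def)
  qed
qed

lemma col_phi_CNN_mat:
  assumes "q < N"
  shows "col (phi_CNN_mat \<sigma> L1 L2 K b P W bh X) q
    = W L2 *\<^sub>v map_vec \<sigma> (fc_pre \<sigma> L1 K b P W bh (col X q) (L2 - 1))"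
proof -
  have "phi_CNN \<sigma> L1 L2 K b P W bh v \<in> carrier_vec J" for v
    unfolding phi_CNN_def using W_out_carrier by (intro carrier_vecI) simp
  then show ?thesis
    using assms X_carrier W_out_carrier unfolding phi_CNN_mat_def
    by (subst col_mat_of_cols) (auto simp: phi_CNN_def)
qed

sublocale lifted: lifted_network \<sigma> B "L1 + L2 - 1" N J "join_layers L1 m n" layer_mat
  "join_layers L1 b bh" "join_layers L1 c ch" "K 1 * X + bcast (b 1) N"
  "phi_CNN_mat \<sigma> L1 L2 K b P W bh X" A pre_activation
proof
  show "1 \<le> L1 + L2 - 1" "0 \<le> B" "lipschitz_with B \<sigma>" "A \<in> carrier_mat J N" "one_hot_cols A"
    using L2_ge_2 B_pos lipschitz A_carrier A_one_hot by auto
  show "layer_mat k \<in> carrier_mat (join_layers L1 m n k) (join_layers L1 m n (k - 1))"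
    if "2 \<le> k" "k \<le> L1 + L2 - 1" for k
    using that by (rule layer_mat_carrier)
  show "layer_mat (Suc (L1 + L2 - 1)) \<in> carrier_mat J (join_layers L1 m n (L1 + L2 - 1))"
    using L2_ge_2 W_out_carrier by (simp add: layer_mat_def)
  show "join_layers L1 b bh k \<in> carrier_vec (join_layers L1 m n k)"
    if "2 \<le> k" "k \<le> L1 + L2 - 1" for k
    using that conv_layer_carrier(3)[of k] fc_layer_carrier(2)[of "k - L1"]
    by (cases "k \<le> L1") auto
  show "join_layers L1 c ch k \<in> carrier_mat (join_layers L1 m n k) N"
    if "1 \<le> k" "k \<le> L1 + L2 - 1" for k
    using that conv_layer_carrier(4)[of k] fc_layer_carrier(3)[of "k - L1"]
    by (cases "k \<le> L1") auto
  show "K 1 * X + bcast (b 1) N \<in> carrier_mat (join_layers L1 m n 1) N"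
    using L1_pos X_carrier conv_layer_carrier(1,3)[of 1] by (auto simp: bcast_def)
  show "phi_CNN_mat \<sigma> L1 L2 K b P W bh X \<in> carrier_mat J N"
    using X_carrier W_out_carrier by (simp add: phi_CNN_mat_def mat_of_cols_def)
  show "pre_activation q 1 = col (K 1 * X + bcast (b 1) N) q" if "q < N" for q
    using that L1_pos X_carrier conv_layer_carrier(1,3)[of 1]
    by (intro eq_vecI) (auto simp: pre_activation_def bcast_def)
  show "pre_activation q k = layer_mat k *\<^sub>v map_vec \<sigma> (pre_activation q (k - 1)) + join_layers L1 b bh k"
    if "q < N" "2 \<le> k" "k \<le> L1 + L2 - 1" for q k
    using that(2,3) by (rule pre_activation_step)
  show "col (phi_CNN_mat \<sigma> L1 L2 K b P W bh X) q
      = layer_mat (Suc (L1 + L2 - 1)) *\<^sub>v map_vec \<sigma> (pre_activation q (L1 + L2 - 1))"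
    if "q < N" for q
    using that L2_ge_2 col_phi_CNN_mat by (simp add: layer_mat_def pre_activation_def)
qed

lemma layer_weight_conv:
  assumes "k \<le> L1"
  shows "lifted.layer_weight k = omega L1 L2 K P W k"
proof -
  define g where "g j = (frob_norm (layer_mat j))\<^sup>2" for j
  have "lifted.layer_weight k = (\<Prod>j\<in>{k+1..L1}. g j) * (\<Prod>l\<in>{1..L2}. g (L1 + l))"
    unfolding lifted.layer_weight_def g_def[symmetric]
    using assms L2_ge_2 prod_atLeastAtMost_add_split[of k L1 g L2] by simp
  also have "(\<Prod>l\<in>{1..L2}. g (L1 + l)) = g (Suc L1) * (\<Prod>l\<in>{2..L2}. g (L1 + l))"
    using L2_ge_2 prod.atLeast_Suc_atMost[of 1 L2 "\<lambda>l. g (L1 + l)"] by (simp add: numeral_2_eq_2)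
  also have "(\<Prod>j\<in>{k+1..L1}. g j) = (\<Prod>j\<in>{k+1..L1}. (frob_norm (K j * P (j - 1)))\<^sup>2)"
    unfolding g_def by (intro prod.cong) auto
  also have "(\<Prod>l\<in>{2..L2}. g (L1 + l)) = (\<Prod>l\<in>{2..L2}. (frob_norm (W l))\<^sup>2)"
    unfolding g_def by (intro prod.cong) auto
  finally show ?thesis
    unfolding omega_def g_def by (simp add: mult_ac)
qed

lemma layer_weight_fc:
  assumes "1 \<le> l"
  shows "lifted.layer_weight (L1 + l) = omega_hat L2 W l"
proof -
  define g where "g j = (frob_norm (layer_mat j))\<^sup>2" for j
  have "lifted.layer_weight (L1 + l) = (\<Prod>i\<in>{l+1..L2}. g (L1 + i))"
    unfolding lifted.layer_weight_def g_def[symmetric]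
    using L2_ge_2 prod_atLeastAtMost_shift[of g L1 l L2] by simp
  also have "\<dots> = omega_hat L2 W l"
    unfolding omega_hat_def g_def using assms by (intro prod.cong) auto
  finally show ?thesis .
qed

lemma T_CNN_eq_lifted_objective: "T_CNN \<sigma> L1 L2 X A K b c P W bh ch = lifted.lifted_objective"
proof -
  define f where "f k = lifted.layer_weight k * (frob_norm (lifted.residual k))\<^sup>2" for k
  have conv_terms: "f k = omega L1 L2 K P W k *
      (frob_norm (K k * P (k - 1) * map_mat \<sigma> (c (k - 1)) + bcast (b k) N - c k))\<^sup>2"
    if "2 \<le> k" "k \<le> L1" for k
    using that unfolding f_def layer_weight_conv[OF that(2)] lifted.residual_def by simp
  have fc_terms: "f (L1 + l) = omega_hat L2 W l *
      (frob_norm (W l * map_mat \<sigma> (ch (l - 1)) + bcast (bh l) N - ch l))\<^sup>2"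
    if "2 \<le> l" for l
    using that layer_weight_fc[of l] unfolding f_def lifted.residual_def by simp
  have "(\<Sum>k\<in>{1..L1 + L2 - 1}. f k) = (\<Sum>k\<in>{1..L1}. f k) + (\<Sum>l\<in>{1..L2 - 1}. f (L1 + l))"
    using sum_atLeastAtMost_add_split[of f L1 "L2 - 1"] L2_ge_2 by simp
  also have "(\<Sum>k\<in>{1..L1}. f k) = f 1 + (\<Sum>k\<in>{2..L1}. f k)"
    using L1_pos sum.atLeast_Suc_atMost[of 1 L1 f] by (simp add: numeral_2_eq_2)
  also have "(\<Sum>l\<in>{1..L2 - 1}. f (L1 + l)) = f (L1 + 1) + (\<Sum>l\<in>{2..L2 - 1}. f (L1 + l))"
    using L2_ge_2 sum.atLeast_Suc_atMost[of 1 "L2 - 1" "\<lambda>l. f (L1 + l)"] by (simp add: numeral_2_eq_2)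
  finally have "(\<Sum>k\<in>{1..L1 + L2 - 1}. f k) = f 1 + (\<Sum>k\<in>{2..L1}. f k) + f (L1 + 1) + (\<Sum>l\<in>{2..L2 - 1}. f (L1 + l))"
    by (simp add: add.assoc)
  moreover have "f 1 = omega L1 L2 K P W 1 * (frob_norm (K 1 * X + bcast (b 1) N - c 1))\<^sup>2"
    using L1_pos unfolding f_def layer_weight_conv[OF L1_pos] lifted.residual_def by simp
  moreover have "f (L1 + 1) = omega_hat L2 W 1 *
      (frob_norm (W 1 * P L1 * map_mat \<sigma> (c L1) + bcast (bh 1) N - ch 1))\<^sup>2"
    using L1_pos unfolding f_def layer_weight_fc[OF order_refl] lifted.residual_def by simp
  moreover have "lifted.lifted_output = W L2 * map_mat \<sigma> (ch (L2 - 1))"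
    using L2_ge_2 layer_mat_fc[of L2] unfolding lifted.lifted_output_def by simp
  ultimately show ?thesis
    unfolding T_CNN_def lifted.lifted_objective_def f_def[symmetric] using X_carrier
    by (simp add: conv_terms fc_terms)
qed

end

theorem theorem4p1:
  fixes \<sigma> :: "real \<Rightarrow> real" and B :: real
    and L1 L2 d N J :: nat
    and m p n :: "nat \<Rightarrow> nat"
    and X A :: "real mat"
    and K P W c ch :: "nat \<Rightarrow> real mat"
    and b bh :: "nat \<Rightarrow> real vec"
  assumes "L1 \<ge> 1" and "L2 \<ge> 2"
    and "X \<in> carrier_mat d N"
    and "A \<in> carrier_mat J N" and "one_hot_cols A"
    and "B > 0" and "lipschitz_with B \<sigma>"
    and "\<forall>l\<in>{1..L1}. K l \<in> carrier_mat (m l) (if l = 1 then d else p (l - 1))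
                  \<and> P l \<in> carrier_mat (p l) (m l)
                  \<and> b l \<in> carrier_vec (m l)
                  \<and> c l \<in> carrier_mat (m l) N"
    and "\<forall>l\<in>{1..<L2}. W l \<in> carrier_mat (n l) (if l = 1 then p L1 else n (l - 1))
                  \<and> bh l \<in> carrier_vec (n l)
                  \<and> ch l \<in> carrier_mat (n l) N"
    and "W L2 \<in> carrier_mat J (n (L2 - 1))"
  shows "L_loss (phi_CNN_mat \<sigma> L1 L2 K b P W bh X) A
         \<le> max (sqrt 2) (max (2 * B) (2 * B ^ (L1 + L2 - 1)))
            * sqrt (real (L1 + L2 - 1))
            * L_S_CNN \<sigma> L1 L2 X A K b c P W bh ch"
proof -
  interpret cnn_setting \<sigma> B L1 L2 d N J m p n X A K P W c ch b bh
    by (rule cnn_setting.intro) (rule assms)+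
  have "2 * max B (B ^ (L1 + L2 - 1)) = max (2 * B) (2 * B ^ (L1 + L2 - 1))"
    by (simp add: max_mult_distrib_left)
  moreover have "L_S_CNN \<sigma> L1 L2 X A K b c P W bh ch = 1 / sqrt (real N) * sqrt lifted.lifted_objective"
    using X_carrier unfolding L_S_CNN_def T_CNN_eq_lifted_objective by simp
  ultimately show ?thesis
    using lifted.loss_le_lifted_objective by simp
qed

end
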